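(* Let $h>0$ and $\theta\in(0,\pi/2)$, and let $\Omega'\subset\mathbb{C}$ be the closed parallelogram with vertices $0,\ 1,\ 1+he^{i\theta},\ he^{i\theta}$. Let $\Gamma'_\theta$ be the family of parallel slanted segments $\{x+se^{i\theta}: 0\le s\le h\}$, $x\in[0,1]$, joining the two horizontal sides of $\Omega'$; let $\Sigma'_0$ be the family of horizontal segments of $\Omega'$ joining its two slanted sides $[0,he^{i\theta}]$ and $[1,1+he^{i\theta}]$; and let $\Sigma'$ be the family of all locally rectifiable curves in $\Omega'$ joining these two slanted sides. Then \[ M_2(\Gamma'_\theta)=\frac{\sin\theta}{h},\qquad M_2(\Gamma'_\theta)\,M_2(\Sigma'_0)=\sin^2\theta, \] and \[ |M_2(\Sigma')-M_2(\Sigma'_0)|\le h\,\frac{\cos^2\theta}{\sin\theta}. \]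
   Context: For a family $\Gamma$ of locally rectifiable curves in a domain of $\mathbb{R}^2$, a non-negative Borel function $\rho$ is admissible if $\int_\gamma\rho\,ds\ge1$ for every $\gamma\in\Gamma$ (arc-length integral), and the 2-module is $M_2(\Gamma)=\inf\int_{\mathbb{R}^2}\rho^2\,dm$ over all admissible $\rho$, where $m$ is Lebesgue measure. *)

theory Defs
  imports "HOL-Analysis.Analysis"
begin

definition curve_length_on :: "(real \<Rightarrow> complex) \<Rightarrow> real \<Rightarrow> real \<Rightarrow> ennreal" where
  "curve_length_on \<gamma> a b =
     (SUP p \<in> {(n, t). t 0 = a \<and> t n = b \<and> (\<forall>i<n. t i \<le> t (Suc i))}.
        (\<Sum>i<fst p. ennreal (norm (\<gamma> (snd p (Suc i)) - \<gamma> (snd p i)))))"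

definition rectifiable_curve :: "(real \<Rightarrow> complex) \<Rightarrow> bool" where
  "rectifiable_curve \<gamma> \<longleftrightarrow> path \<gamma> \<and> curve_length_on \<gamma> 0 1 < \<infinity>"

definition arclength_fun :: "(real \<Rightarrow> complex) \<Rightarrow> real \<Rightarrow> real" where
  "arclength_fun \<gamma> t = enn2real (curve_length_on \<gamma> 0 (min 1 (max 0 t)))"

definition arclength_integral :: "(complex \<Rightarrow> ennreal) \<Rightarrow> (real \<Rightarrow> complex) \<Rightarrow> ennreal" where
  "arclength_integral \<rho> \<gamma> =
     (\<integral>\<^sup>+ t. \<rho> (\<gamma> t) * indicator {0..1} t \<partial>interval_measure (arclength_fun \<gamma>))"

definition admissible :: "(real \<Rightarrow> complex) set \<Rightarrow> (complex \<Rightarrow> ennreal) \<Rightarrow> bool" where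
  "admissible \<Gamma> \<rho> \<longleftrightarrow> \<rho> \<in> borel_measurable borel \<and> (\<forall>\<gamma>\<in>\<Gamma>. arclength_integral \<rho> \<gamma> \<ge> 1)"

definition module2 :: "(real \<Rightarrow> complex) set \<Rightarrow> ennreal" where
  "module2 \<Gamma> = (INF \<rho> \<in> {\<rho>. admissible \<Gamma> \<rho>}. \<integral>\<^sup>+ z. (\<rho> z)\<^sup>2 \<partial>lborel)"

end

theory Submission
  imports Defs
begin

text \<open>With \<open>w = h e\<^sup>i\<^sup>\<theta>\<close>, the parallelogram has area \<open>Im w = h sin \<theta>\<close>. For each family of parallel
  segments, the density that is constant on the parallelogram and makes every segment have
  \<open>\<rho>\<close>-length one is admissible, which gives the upper bound; conversely, Cauchy--Schwarz on each
  segment shows that any admissible \<open>\<rho>\<close> has \<open>\<integral> \<rho>\<^sup>2 \<ge> 1 / length\<^sup>2\<close> along it, and integrating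
  over the family in oblique coordinates gives the matching lower bound. Hence
  \<open>M(\<Gamma>'\<^sub>\<theta>) = sin \<theta> / h\<close> and \<open>M(\<Sigma>'\<^sub>0) = h sin \<theta>\<close>. Since \<open>\<Sigma>'\<^sub>0 \<subseteq> \<Sigma>'\<close>, \<open>M(\<Sigma>'\<^sub>0) \<le> M(\<Sigma>')\<close>; and
  \<open>\<rho> = 1 / sin \<theta>\<close> on the parallelogram is admissible for \<open>\<Sigma>'\<close>, because the slanted sides are
  at distance \<open>sin \<theta>\<close>, so \<open>M(\<Sigma>') \<le> h / sin \<theta> = M(\<Sigma>'\<^sub>0) + h cos\<^sup>2 \<theta> / sin \<theta>\<close>.\<close>

section \<open>Length of a curve\<close>

definition partitions :: "real \<Rightarrow> real \<Rightarrow> (nat \<times> (nat \<Rightarrow> real)) set" where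
  "partitions a b = {(n, t). t 0 = a \<and> t n = b \<and> (\<forall>i<n. t i \<le> t (Suc i))}"

definition polygonal_length :: "(real \<Rightarrow> complex) \<Rightarrow> nat \<Rightarrow> (nat \<Rightarrow> real) \<Rightarrow> ennreal" where
  "polygonal_length \<gamma> n t = (\<Sum>i<n. ennreal (norm (\<gamma> (t (Suc i)) - \<gamma> (t i))))"

lemma curve_length_on_eq_SUP_partitions:
  "curve_length_on \<gamma> a b = (SUP p\<in>partitions a b. polygonal_length \<gamma> (fst p) (snd p))"
  unfolding curve_length_on_def partitions_def polygonal_length_def by simp

lemma polygonal_length_le_curve_length_on:
  "(n, t) \<in> partitions a b \<Longrightarrow> polygonal_length \<gamma> n t \<le> curve_length_on \<gamma> a b"
  unfolding curve_length_on_eq_SUP_partitions by (rule SUP_upper2[of "(n, t)"]) auto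

lemma curve_length_on_leI:
  "(\<And>n t. (n, t) \<in> partitions a b \<Longrightarrow> polygonal_length \<gamma> n t \<le> X) \<Longrightarrow> curve_length_on \<gamma> a b \<le> X"
  unfolding curve_length_on_eq_SUP_partitions by (rule SUP_least) auto

lemma polygonal_length_Suc:
  "polygonal_length \<gamma> (Suc n) t = polygonal_length \<gamma> n t + ennreal (norm (\<gamma> (t (Suc n)) - \<gamma> (t n)))"
  by (simp add: polygonal_length_def)

lemma polygonal_length_add:
  "polygonal_length \<gamma> (j + k) t = polygonal_length \<gamma> j t + polygonal_length \<gamma> k (\<lambda>i. t (j + i))"
  by (induction k) (simp_all add: polygonal_length_def add.assoc)

lemma polygonal_length_cong:
  "(\<And>i. i \<le> n \<Longrightarrow> t i = u i) \<Longrightarrow> polygonal_length \<gamma> n t = polygonal_length \<gamma> n u"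
  unfolding polygonal_length_def by (intro sum.cong) auto

lemma partition_mono:
  assumes "(n, t) \<in> partitions a b" "i \<le> j" "j \<le> n"
  shows "t i \<le> t j"
  using assms(2,3)
proof (induction j)
  case (Suc j)
  then show ?case
    using assms(1) by (cases "i = Suc j") (auto simp: partitions_def intro: order_trans)
qed simp

lemma partition_bounds:
  "(n, t) \<in> partitions a b \<Longrightarrow> i \<le> n \<Longrightarrow> a \<le> t i \<and> t i \<le> b"
  using partition_mono[of n t a b 0 i] partition_mono[of n t a b i n] by (auto simp: partitions_def)

lemma partitions_nonempty: "a \<le> b \<Longrightarrow> partitions a b \<noteq> {}"
  by (auto simp: partitions_def intro!: exI[of _ 1] exI[of _ "\<lambda>i. if i = 0 then a else b"])

lemma norm_le_curve_length_on:
  "a \<le> b \<Longrightarrow> ennreal (norm (\<gamma> b - \<gamma> a)) \<le> curve_length_on \<gamma> a b"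
  using polygonal_length_le_curve_length_on[of 1 "\<lambda>i. if i = 0 then a else b" a b \<gamma>]
  by (simp add: partitions_def polygonal_length_def)

lemma curve_length_on_superadditive:
  assumes "a \<le> s" "s \<le> b"
  shows "curve_length_on \<gamma> a s + curve_length_on \<gamma> s b \<le> curve_length_on \<gamma> a b"
proof -
  have concat: "polygonal_length \<gamma> n t + polygonal_length \<gamma> m u \<le> curve_length_on \<gamma> a b"
    if nt: "(n, t) \<in> partitions a s" and mu: "(m, u) \<in> partitions s b" for n t m u
  proof -
    define c where "c i = (if i \<le> n then t i else u (i - n))" for i
    have "(n + m, c) \<in> partitions a b"
      using nt mu unfolding partitions_def c_def
      by (auto simp: not_le Suc_diff_le less_Suc_eq_le)
    then have "polygonal_length \<gamma> (n + m) c \<le> curve_length_on \<gamma> a b"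
      by (rule polygonal_length_le_curve_length_on)
    moreover have "polygonal_length \<gamma> n c = polygonal_length \<gamma> n t"
      by (rule polygonal_length_cong) (simp add: c_def)
    moreover have "(\<lambda>i. c (n + i)) = u"
      using nt mu unfolding c_def partitions_def by (auto simp: fun_eq_iff)
    ultimately show ?thesis by (simp add: polygonal_length_add)
  qed
  have ne: "partitions a s \<noteq> {}" "partitions s b \<noteq> {}"
    using assms partitions_nonempty by auto
  have "curve_length_on \<gamma> a s + curve_length_on \<gamma> s b
       = (SUP p\<in>partitions a s. SUP q\<in>partitions s b.
            polygonal_length \<gamma> (fst p) (snd p) + polygonal_length \<gamma> (fst q) (snd q))"
    unfolding curve_length_on_eq_SUP_partitions using ne
    by (simp add: ennreal_SUP_add_left[symmetric] ennreal_SUP_add_right) (rule SUP_commute)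
  also have "\<dots> \<le> curve_length_on \<gamma> a b"
    by (intro SUP_least) (auto intro: concat)
  finally show ?thesis .
qed

text \<open>Refining a partition by a point \<open>s\<close> of its \<open>k\<close>-th interval can only increase the polygonal
  length (triangle inequality), and the refined partition splits at \<open>s\<close>.\<close>
lemma polygonal_length_le_split:
  assumes nt: "(n, t) \<in> partitions a b" and k: "k < n" "t k \<le> s" "s \<le> t (Suc k)"
  shows "polygonal_length \<gamma> n t \<le> curve_length_on \<gamma> a s + curve_length_on \<gamma> s b"
proof -
  define l where "l = polygonal_length \<gamma> k t"
  define r where "r = polygonal_length \<gamma> (n - Suc k) (\<lambda>i. t (Suc k + i))"
  have "polygonal_length \<gamma> n t = l + ennreal (norm (\<gamma> (t (Suc k)) - \<gamma> (t k))) + r"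
    using polygonal_length_add[of \<gamma> "Suc k" "n - Suc k" t] k
    by (simp add: l_def r_def polygonal_length_Suc)
  also have "\<dots> \<le> l + (ennreal (norm (\<gamma> s - \<gamma> (t k))) + ennreal (norm (\<gamma> (t (Suc k)) - \<gamma> s))) + r"
    using norm_triangle_ineq[of "\<gamma> s - \<gamma> (t k)" "\<gamma> (t (Suc k)) - \<gamma> s"]
    by (intro add_mono order_refl) (simp add: ennreal_plus[symmetric] del: ennreal_plus)
  also have "\<dots> = (l + ennreal (norm (\<gamma> s - \<gamma> (t k))))
                  + (ennreal (norm (\<gamma> (t (Suc k)) - \<gamma> s)) + r)"
    by (simp add: add.assoc)
  also have "\<dots> \<le> curve_length_on \<gamma> a s + curve_length_on \<gamma> s b"
  proof (rule add_mono)
    have "(Suc k, t(Suc k := s)) \<in> partitions a s"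
      using nt k unfolding partitions_def by auto
    moreover have "polygonal_length \<gamma> (Suc k) (t(Suc k := s)) = l + ennreal (norm (\<gamma> s - \<gamma> (t k)))"
      unfolding polygonal_length_Suc l_def by (subst polygonal_length_cong[of k _ t]) auto
    ultimately show "l + ennreal (norm (\<gamma> s - \<gamma> (t k))) \<le> curve_length_on \<gamma> a s"
      by (metis polygonal_length_le_curve_length_on)
  next
    define u where "u i = (if i = 0 then s else t (k + i))" for i
    have "(1 + (n - Suc k), u) \<in> partitions s b"
      using nt k unfolding partitions_def u_def by (auto simp: less_Suc_eq_0_disj)
    moreover have "polygonal_length \<gamma> (1 + (n - Suc k)) u = ennreal (norm (\<gamma> (t (Suc k)) - \<gamma> s)) + r"
      unfolding polygonal_length_add r_def by (simp add: polygonal_length_def u_def)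
    ultimately show "ennreal (norm (\<gamma> (t (Suc k)) - \<gamma> s)) + r \<le> curve_length_on \<gamma> s b"
      by (metis polygonal_length_le_curve_length_on)
  qed
  finally show ?thesis .
qed

lemma curve_length_on_subadditive:
  assumes "a \<le> s" "s \<le> b"
  shows "curve_length_on \<gamma> a b \<le> curve_length_on \<gamma> a s + curve_length_on \<gamma> s b"
proof (rule curve_length_on_leI)
  fix n t assume nt: "(n, t) \<in> partitions a b"
  show "polygonal_length \<gamma> n t \<le> curve_length_on \<gamma> a s + curve_length_on \<gamma> s b"
  proof (cases n)
    case 0
    then show ?thesis by (simp add: polygonal_length_def)
  next
    case (Suc m)
    define k where "k = (LEAST k. s \<le> t (Suc k))"
    have "s \<le> t (Suc m)" using nt Suc assms by (simp add: partitions_def)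
    then have "s \<le> t (Suc k)" "k \<le> m"
      unfolding k_def by (auto intro: LeastI Least_le)
    moreover have "t k \<le> s"
    proof (cases k)
      case (Suc j)
      then show ?thesis using not_less_Least[of j "\<lambda>k. s \<le> t (Suc k)"] k_def by simp
    qed (use nt assms in \<open>simp add: partitions_def\<close>)
    ultimately show ?thesis
      using polygonal_length_le_split[OF nt, of k s] Suc by simp
  qed
qed

lemma curve_length_on_additive:
  "a \<le> s \<Longrightarrow> s \<le> b \<Longrightarrow> curve_length_on \<gamma> a b = curve_length_on \<gamma> a s + curve_length_on \<gamma> s b"
  by (metis antisym curve_length_on_subadditive curve_length_on_superadditive)

lemma curve_length_on_mono:
  "a \<le> s \<Longrightarrow> s \<le> b \<Longrightarrow> curve_length_on \<gamma> a s \<le> curve_length_on \<gamma> a b"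
  by (metis curve_length_on_additive le_iff_add)

lemma curve_length_on_finite:
  assumes "curve_length_on \<gamma> 0 1 < \<infinity>" "0 \<le> u" "u \<le> v" "v \<le> 1"
  shows "curve_length_on \<gamma> u v < \<infinity>"
proof -
  have "curve_length_on \<gamma> u v \<le> curve_length_on \<gamma> 0 u + curve_length_on \<gamma> u 1"
    using assms by (intro add_increasing curve_length_on_mono) auto
  also have "\<dots> = curve_length_on \<gamma> 0 1"
    using assms by (intro curve_length_on_additive[symmetric]) auto
  finally show ?thesis using assms(1) by (simp add: le_less_trans)
qed

lemma partition_first_step:
  assumes nt: "(n, t) \<in> partitions x y" and "x < y"
  shows "\<exists>q. x < q \<and> q \<le> y \<and>
           polygonal_length \<gamma> n t \<le> ennreal (norm (\<gamma> q - \<gamma> x)) + curve_length_on \<gamma> q y"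
proof -
  define j where "j = (LEAST j. x < t j)"
  have "x < t n" using nt assms by (simp add: partitions_def)
  then have xj: "x < t j" and jn: "j \<le> n"
    unfolding j_def by (auto intro: LeastI Least_le)
  have "j \<noteq> 0" using xj nt by (cases j) (auto simp: partitions_def)
  then obtain k where jk: "j = Suc k" by (cases j) auto
  have tx: "t i = x" if "i \<le> k" for i
    using not_less_Least[of i "\<lambda>j. x < t j"] partition_bounds[OF nt, of i] that jk jn
    unfolding j_def by auto
  have "polygonal_length \<gamma> k t = polygonal_length \<gamma> k (\<lambda>_. x)"
    by (rule polygonal_length_cong) (simp add: tx)
  then have head: "polygonal_length \<gamma> j t = ennreal (norm (\<gamma> (t j) - \<gamma> x))"
    using tx[of k] by (simp add: jk polygonal_length_Suc polygonal_length_def)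
  have "(n - j, \<lambda>i. t (j + i)) \<in> partitions (t j) y"
    using nt jn by (auto simp: partitions_def)
  then have tail: "polygonal_length \<gamma> (n - j) (\<lambda>i. t (j + i)) \<le> curve_length_on \<gamma> (t j) y"
    by (rule polygonal_length_le_curve_length_on)
  have "polygonal_length \<gamma> n t = polygonal_length \<gamma> j t + polygonal_length \<gamma> (n - j) (\<lambda>i. t (j + i))"
    using polygonal_length_add[of \<gamma> j "n - j" t] jn by simp
  then show ?thesis
    using head tail xj partition_bounds[OF nt jn] by (intro exI[of _ "t j"]) (auto intro: add_left_mono)
qed

text \<open>Right continuity of the length: the first partition point \<open>q > x\<close> of an almost optimal
  partition of a short interval \<open>[x, y]\<close> carries almost all of the length of \<open>[x, y]\<close> in
  \<open>[q, y]\<close>, while \<open>\<gamma>\<close> moves little on \<open>[x, q]\<close>.\<close>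
lemma curve_length_on_small_right:
  assumes cont: "continuous_on {0..1} \<gamma>" and fin: "curve_length_on \<gamma> 0 1 < \<infinity>"
    and x: "0 \<le> x" "x < 1" and e: "\<epsilon> > 0"
  shows "\<exists>q>x. q \<le> 1 \<and> curve_length_on \<gamma> x q < ennreal \<epsilon>"
proof -
  obtain \<delta> where "\<delta> > 0" and close: "\<And>u. u \<in> {0..1} \<Longrightarrow> dist u x < \<delta> \<Longrightarrow> dist (\<gamma> u) (\<gamma> x) < \<epsilon> / 3"
    using cont x e unfolding continuous_on_iff by (metis atLeastAtMost_iff divide_pos_pos less_eq_real_def zero_less_numeral)
  define y where "y = min 1 (x + \<delta> / 2)"
  have y: "x < y" "y \<le> 1" using x \<open>\<delta> > 0\<close> by (auto simp: y_def)
  have "curve_length_on \<gamma> x y \<noteq> \<infinity>" using curve_length_on_finite[OF fin, of x y] x y by simp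
  then obtain p where "p \<in> partitions x y"
    and "curve_length_on \<gamma> x y < polygonal_length \<gamma> (fst p) (snd p) + ennreal (\<epsilon> / 3)"
    using SUP_approx_ennreal[OF _ partitions_nonempty curve_length_on_eq_SUP_partitions] e y
    by (metis divide_pos_pos less_imp_le zero_less_numeral)
  then obtain n t where nt: "(n, t) \<in> partitions x y"
    and approx: "curve_length_on \<gamma> x y < polygonal_length \<gamma> n t + ennreal (\<epsilon> / 3)"
    by (cases p) auto
  obtain q where q: "x < q" "q \<le> y"
    and first: "polygonal_length \<gamma> n t \<le> ennreal (norm (\<gamma> q - \<gamma> x)) + curve_length_on \<gamma> q y"
    using partition_first_step[OF nt y(1)] by blast
  have "norm (\<gamma> q - \<gamma> x) < \<epsilon> / 3"
    using close[of q] q x y \<open>\<delta> > 0\<close> by (simp add: dist_norm y_def)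
  then have "ennreal (norm (\<gamma> q - \<gamma> x)) \<le> ennreal (\<epsilon> / 3)" by (intro ennreal_leI) simp
  have "curve_length_on \<gamma> q y + curve_length_on \<gamma> x q = curve_length_on \<gamma> x y"
    using curve_length_on_additive[of x q y \<gamma>] q by (simp add: add.commute)
  also have "\<dots> < ennreal (norm (\<gamma> q - \<gamma> x)) + curve_length_on \<gamma> q y + ennreal (\<epsilon> / 3)"
    using approx first by (meson add_right_mono order_less_le_trans)
  also have "\<dots> \<le> curve_length_on \<gamma> q y + (ennreal (\<epsilon> / 3) + ennreal (\<epsilon> / 3))"
    using \<open>ennreal (norm (\<gamma> q - \<gamma> x)) \<le> ennreal (\<epsilon> / 3)\<close> by (simp add: algebra_simps add_right_mono)
  finally have "curve_length_on \<gamma> x q < ennreal (\<epsilon> / 3) + ennreal (\<epsilon> / 3)"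
    by (simp add: ennreal_add_left_cancel_less)
  also have "\<dots> < ennreal \<epsilon>"
    using e by (simp add: ennreal_plus[symmetric] ennreal_lessI del: ennreal_plus)
  finally show ?thesis using q y by auto
qed

section \<open>Arc-length integrals\<close>

lemma emeasure_density_unit_interval_Ioc:
  fixes c :: real
  assumes "c \<ge> 0" "a \<le> b"
  shows "emeasure (density lborel (\<lambda>t. ennreal c * indicator {0<..1} t)) {a<..b}
       = ennreal (c * min 1 (max 0 b) - c * min 1 (max 0 a))"
proof -
  have "emeasure (density lborel (\<lambda>t. ennreal c * indicator {0<..1} t)) {a<..b}
      = ennreal c * emeasure lborel {max 0 a<..min 1 b}"
    by (subst emeasure_density)
       (auto simp: nn_integral_cmult_indicator[symmetric] intro!: nn_integral_cong split: split_indicator)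
  also have "\<dots> = ennreal (c * min 1 (max 0 b) - c * min 1 (max 0 a))"
  proof (cases "max 0 a \<le> min 1 b")
    case True
    then have "min 1 (max 0 b) = min 1 b" "min 1 (max 0 a) = max 0 a" by auto
    then show ?thesis
      using True assms by (simp add: ennreal_mult[symmetric] right_diff_distrib)
  next
    case False
    then have "min 1 (max 0 b) = min 1 (max 0 a)" "{max 0 a<..min 1 b} = {}"
      using \<open>a \<le> b\<close> by (auto simp: min_def max_def split: if_splits)
    then show ?thesis by simp
  qed
  finally show ?thesis .
qed

lemma interval_measure_scaled_clamp:
  fixes c :: real
  assumes "c \<ge> 0"
  shows "interval_measure (\<lambda>t. c * min 1 (max 0 t)) = density lborel (\<lambda>t. ennreal c * indicator {0<..1} t)"
proof (rule measure_eqI_generator_eq[where \<Omega>=UNIV and E="range (\<lambda>(a, b). {a<..b::real})"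
      and A="\<lambda>i. {- real i<..real i}"])
  have Ioc: "emeasure (interval_measure (\<lambda>t. c * min 1 (max 0 t))) {a<..b}
      = ennreal (c * min 1 (max 0 b) - c * min 1 (max 0 a))" if "a \<le> b" for a b
    using assms that by (intro emeasure_interval_measure_Ioc mult_left_mono continuous_intros) auto
  show "emeasure (interval_measure (\<lambda>t. c * min 1 (max 0 t))) {- real i<..real i} \<noteq> \<infinity>" for i
    using Ioc[of "- real i" "real i"] by simp
  fix X assume "X \<in> range (\<lambda>(a, b). {a<..b::real})"
  then obtain a b where "X = {a<..b}" by auto
  then show "emeasure (interval_measure (\<lambda>t. c * min 1 (max 0 t))) X
      = emeasure (density lborel (\<lambda>t. ennreal c * indicator {0<..1} t)) X"
    using Ioc[of a b] emeasure_density_unit_interval_Ioc[OF assms, of a b] by (cases "a \<le> b") auto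
next
  show "sets (interval_measure (\<lambda>t. c * min 1 (max 0 t))) = sigma_sets UNIV (range (\<lambda>(a, b). {a<..b::real}))"
    "sets (density lborel (\<lambda>t. ennreal c * indicator {0<..1} t)) = sigma_sets UNIV (range (\<lambda>(a, b). {a<..b::real}))"
    by (simp_all add: borel_sigma_sets_Ioc)
  show "(\<Union>i. {- real i<..real i}) = UNIV"
  proof (rule sym, rule UNIV_eq_I)
    fix x :: real
    obtain n :: nat where "\<bar>x\<bar> < real n" using reals_Archimedean2 by blast
    then show "x \<in> (\<Union>i. {- real i<..real i})" by (auto intro!: exI[of _ n])
  qed
qed (auto simp: Int_stable_def)

lemma arclength_fun_mono:
  assumes fin: "curve_length_on \<gamma> 0 1 < \<infinity>" and "x \<le> y"
  shows "arclength_fun \<gamma> x \<le> arclength_fun \<gamma> y"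
  unfolding arclength_fun_def
  using assms curve_length_on_finite[OF fin, of 0 "min 1 (max 0 y)"]
  by (intro enn2real_mono curve_length_on_mono) auto

lemma arclength_fun_diff:
  assumes fin: "curve_length_on \<gamma> 0 1 < \<infinity>" and "0 \<le> u" "u \<le> v" "v \<le> 1"
  shows "arclength_fun \<gamma> v - arclength_fun \<gamma> u = enn2real (curve_length_on \<gamma> u v)"
  using assms curve_length_on_additive[of 0 u v \<gamma>]
    curve_length_on_finite[OF fin, of 0 u] curve_length_on_finite[OF fin, of u v]
  by (simp add: arclength_fun_def enn2real_plus)

lemma arclength_fun_continuous_at_right:
  assumes cont: "continuous_on {0..1} \<gamma>" and fin: "curve_length_on \<gamma> 0 1 < \<infinity>"
  shows "continuous (at_right a) (arclength_fun \<gamma>)"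
  unfolding continuous_within
proof -
  consider "a < 0" | "1 \<le> a" | "0 \<le> a" "a < 1" by linarith
  then show "(arclength_fun \<gamma> \<longlongrightarrow> arclength_fun \<gamma> a) (at_right a)"
  proof cases
    case 1
    have "\<forall>\<^sub>F t in at_right a. arclength_fun \<gamma> t = arclength_fun \<gamma> a"
      using 1 by (subst eventually_at_right[of a 0]) (auto simp: arclength_fun_def intro!: exI[of _ 0])
    then show ?thesis by (rule tendsto_eventually)
  next
    case 2
    have "\<forall>\<^sub>F t in at_right a. arclength_fun \<gamma> t = arclength_fun \<gamma> a"
      using 2 by (subst eventually_at_right[of a "a + 1"]) (auto simp: arclength_fun_def intro!: exI[of _ "a + 1"])
    then show ?thesis by (rule tendsto_eventually)
  next
    case 3
    show ?thesis
    proof (rule tendstoI)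
      fix e :: real assume "e > 0"
      then obtain q where q: "a < q" "q \<le> 1" and small: "curve_length_on \<gamma> a q < ennreal e"
        using curve_length_on_small_right[OF cont fin 3] by blast
      have "\<forall>\<^sub>F t in at_right a. a < t \<and> t < q"
        using q by (subst eventually_at_right[of a q]) auto
      then show "\<forall>\<^sub>F t in at_right a. dist (arclength_fun \<gamma> t) (arclength_fun \<gamma> a) < e"
      proof eventually_elim
        case (elim t)
        have "curve_length_on \<gamma> a t < ennreal e"
          using elim small curve_length_on_mono[of a t q \<gamma>] by simp
        moreover have "curve_length_on \<gamma> a t < \<infinity>"
          using curve_length_on_finite[OF fin, of a t] elim 3 q by simp
        ultimately show ?case
          using arclength_fun_diff[OF fin, of a t] elim 3 q by (simp add: dist_real_def enn2real_less_iff)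
      qed
    qed
  qed
qed

lemma emeasure_arclength_measure:
  assumes "rectifiable_curve \<gamma>"
  shows "emeasure (interval_measure (arclength_fun \<gamma>)) {0<..1} = curve_length_on \<gamma> 0 1"
proof -
  have cont: "continuous_on {0..1} \<gamma>" and fin: "curve_length_on \<gamma> 0 1 < \<infinity>"
    using assms by (auto simp: rectifiable_curve_def path_def)
  have "emeasure (interval_measure (arclength_fun \<gamma>)) {0<..1}
      = ennreal (arclength_fun \<gamma> 1 - arclength_fun \<gamma> 0)"
    by (rule emeasure_interval_measure_Ioc)
       (auto intro: arclength_fun_mono[OF fin] arclength_fun_continuous_at_right[OF cont fin])
  also have "\<dots> = curve_length_on \<gamma> 0 1"
    using arclength_fun_diff[OF fin, of 0 1] fin by simp
  finally show ?thesis .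
qed

lemma arclength_integral_ge_norm:
  assumes "rectifiable_curve \<gamma>" and "\<And>t. t \<in> {0..1} \<Longrightarrow> c \<le> \<rho> (\<gamma> t)"
  shows "c * ennreal (norm (\<gamma> 1 - \<gamma> 0)) \<le> arclength_integral \<rho> \<gamma>"
proof -
  define \<mu> where "\<mu> = interval_measure (arclength_fun \<gamma>)"
  have "c * ennreal (norm (\<gamma> 1 - \<gamma> 0)) \<le> c * emeasure \<mu> {0<..1}"
    unfolding \<mu>_def emeasure_arclength_measure[OF assms(1)]
    by (intro mult_left_mono norm_le_curve_length_on) auto
  also have "\<dots> = (\<integral>\<^sup>+ t. c * indicator {0<..1} t \<partial>\<mu>)"
    by (simp add: \<mu>_def nn_integral_cmult_indicator)
  also have "\<dots> \<le> (\<integral>\<^sup>+ t. \<rho> (\<gamma> t) * indicator {0..1} t \<partial>\<mu>)"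
    by (intro nn_integral_mono) (auto simp: assms(2) split: split_indicator)
  finally show ?thesis unfolding arclength_integral_def \<mu>_def .
qed

lemma polygonal_length_linepath:
  assumes "(n, t) \<in> partitions a b"
  shows "polygonal_length (linepath p q) n t = ennreal (norm (q - p) * (b - a))"
proof -
  have step: "norm (linepath p q (t (Suc i)) - linepath p q (t i)) = norm (q - p) * (t (Suc i) - t i)"
    if "i < n" for i
  proof -
    have "linepath p q (t (Suc i)) - linepath p q (t i) = (t (Suc i) - t i) *\<^sub>R (q - p)"
      by (simp add: linepath_def algebra_simps)
    then show ?thesis using assms that by (simp add: partitions_def)
  qed
  have "polygonal_length (linepath p q) n t = ennreal (\<Sum>i<n. norm (q - p) * (t (Suc i) - t i))"
    unfolding polygonal_length_def using assms
    by (subst sum_ennreal[symmetric]) (auto simp: step partitions_def)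
  also have "\<dots> = ennreal (norm (q - p) * (b - a))"
    using assms by (simp add: sum_distrib_left[symmetric] sum_lessThan_telescope partitions_def)
  finally show ?thesis .
qed

lemma curve_length_on_linepath:
  assumes "a \<le> b"
  shows "curve_length_on (linepath p q) a b = ennreal (norm (q - p) * (b - a))"
  using partitions_nonempty[OF assms]
  by (simp add: curve_length_on_eq_SUP_partitions polygonal_length_linepath split_beta)

lemma arclength_integral_linepath:
  assumes [measurable]: "\<rho> \<in> borel_measurable borel"
  shows "arclength_integral \<rho> (linepath p q) =
         ennreal (norm (q - p)) * (\<integral>\<^sup>+ t. \<rho> (linepath p q t) * indicator {0..1} t \<partial>lborel)"
proof -
  have [measurable]: "linepath p q \<in> borel_measurable borel"
    by (intro borel_measurable_continuous_onI) (simp add: linepath_def continuous_intros)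
  have "arclength_fun (linepath p q) = (\<lambda>t. norm (q - p) * min 1 (max 0 t))"
    by (simp add: fun_eq_iff arclength_fun_def curve_length_on_linepath)
  then have "arclength_integral \<rho> (linepath p q) =
      (\<integral>\<^sup>+ t. ennreal (norm (q - p)) * indicator {0<..1} t * (\<rho> (linepath p q t) * indicator {0..1} t) \<partial>lborel)"
    unfolding arclength_integral_def by (simp add: interval_measure_scaled_clamp nn_integral_density)
  also have "\<dots> = (\<integral>\<^sup>+ t. ennreal (norm (q - p)) * (\<rho> (linepath p q t) * indicator {0..1} t) \<partial>lborel)"
    using AE_lborel_singleton[of 0]
    by (intro nn_integral_cong_AE) (auto elim!: eventually_mono split: split_indicator)
  also have "\<dots> = ennreal (norm (q - p)) * (\<integral>\<^sup>+ t. \<rho> (linepath p q t) * indicator {0..1} t \<partial>lborel)"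
    by (simp add: nn_integral_cmult)
  finally show ?thesis .
qed

lemma linepath_add: "linepath p (p + d) t = p + of_real t * d"
  by (simp add: linepath_def scaleR_conv_of_real algebra_simps)

lemma arclength_integral_linepath_add:
  assumes "\<rho> \<in> borel_measurable borel"
  shows "arclength_integral \<rho> (linepath p (p + d)) =
         ennreal (cmod d) * (\<integral>\<^sup>+ t. \<rho> (p + of_real t * d) * indicator {0..1} t \<partial>lborel)"
  using assms by (simp add: arclength_integral_linepath linepath_add)

section \<open>Lebesgue measure in oblique coordinates\<close>

lemma lborel_complex_eq_distr_pair:
  "lborel = distr (lborel \<Otimes>\<^sub>M lborel) borel (\<lambda>p. Complex (fst p) (snd p))"
proof (rule lborel_eqI)
  fix l u :: complex
  assume le: "\<And>b. b \<in> Basis \<Longrightarrow> l \<bullet> b \<le> u \<bullet> b"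
  have re: "Re l \<le> Re u" and im: "Im l \<le> Im u"
    using le[of 1] le[of \<i>] by (simp_all add: inner_complex_def)
  have [measurable]: "(\<lambda>p. Complex (fst p) (snd p)) \<in> borel_measurable (lborel \<Otimes>\<^sub>M lborel)"
    by (simp add: Complex_eq)
  have "(\<lambda>p. Complex (fst p) (snd p)) -` box l u \<inter> space (lborel \<Otimes>\<^sub>M lborel)
      = {Re l<..<Re u} \<times> {Im l<..<Im u}"
    by (auto simp: box_def Basis_complex_def inner_complex_def space_pair_measure)
  then have "emeasure (distr (lborel \<Otimes>\<^sub>M lborel) borel (\<lambda>p. Complex (fst p) (snd p))) (box l u)
      = ennreal (Re u - Re l) * ennreal (Im u - Im l)"
    using re im by (simp add: emeasure_distr lborel.emeasure_pair_measure_Times)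
  also have "\<dots> = ennreal (\<Prod>b\<in>Basis. (u - l) \<bullet> b)"
    using re im by (simp add: Basis_complex_def inner_complex_def ennreal_mult)
  finally show "emeasure (distr (lborel \<Otimes>\<^sub>M lborel) borel (\<lambda>p. Complex (fst p) (snd p))) (box l u)
      = ennreal (\<Prod>b\<in>Basis. (u - l) \<bullet> b)" .
qed simp

lemma nn_integral_lborel_complex:
  fixes g :: "complex \<Rightarrow> ennreal"
  assumes [measurable]: "g \<in> borel_measurable borel"
  shows "(\<integral>\<^sup>+ z. g z \<partial>lborel) = (\<integral>\<^sup>+ y. \<integral>\<^sup>+ x. g (Complex x y) \<partial>lborel \<partial>lborel)"
proof -
  have [measurable]: "(\<lambda>p. Complex (fst p) (snd p)) \<in> borel_measurable (lborel \<Otimes>\<^sub>M lborel)"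
    by (simp add: Complex_eq)
  have "(\<integral>\<^sup>+ z. g z \<partial>lborel) = (\<integral>\<^sup>+ p. g (Complex (fst p) (snd p)) \<partial>(lborel \<Otimes>\<^sub>M lborel))"
    by (subst lborel_complex_eq_distr_pair) (simp add: nn_integral_distr)
  also have "\<dots> = (\<integral>\<^sup>+ y. \<integral>\<^sup>+ x. g (Complex x y) \<partial>lborel \<partial>lborel)"
    by (subst lborel_pair.nn_integral_snd[symmetric]) auto
  finally show ?thesis .
qed

lemma nn_integral_lborel_oblique:
  fixes w :: complex and g :: "complex \<Rightarrow> ennreal"
  assumes [measurable]: "g \<in> borel_measurable borel" and w: "Im w > 0"
  shows "(\<integral>\<^sup>+ z. g z \<partial>lborel) = ennreal (Im w) * (\<integral>\<^sup>+ t. \<integral>\<^sup>+ x. g (of_real x + of_real t * w) \<partial>lborel \<partial>lborel)"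
proof -
  define H where "H y = (\<integral>\<^sup>+ x. g (Complex x y) \<partial>lborel)" for y
  have "(\<lambda>(y, x). g (Complex x y)) \<in> borel_measurable (lborel \<Otimes>\<^sub>M lborel)"
    by (simp add: Complex_eq case_prod_beta')
  then have [measurable]: "H \<in> borel_measurable borel"
    unfolding H_def using lborel.borel_measurable_nn_integral by simp
  have inner: "(\<integral>\<^sup>+ x. g (of_real x + of_real t * w) \<partial>lborel) = H (Im w * t)" for t
  proof -
    have "H (Im w * t) = ennreal \<bar>1\<bar> * (\<integral>\<^sup>+ x. g (Complex (t * Re w + 1 * x) (Im w * t)) \<partial>lborel)"
      unfolding H_def by (rule nn_integral_real_affine) (auto simp: Complex_eq)
    also have "\<dots> = (\<integral>\<^sup>+ x. g (of_real x + of_real t * w) \<partial>lborel)"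
      by (simp, intro nn_integral_cong arg_cong[where f=g]) (auto simp: complex_eq_iff algebra_simps)
    finally show ?thesis ..
  qed
  have "(\<integral>\<^sup>+ z. g z \<partial>lborel) = (\<integral>\<^sup>+ y. H y \<partial>lborel)"
    unfolding H_def by (rule nn_integral_lborel_complex) simp
  also have "\<dots> = ennreal \<bar>Im w\<bar> * (\<integral>\<^sup>+ t. H (0 + Im w * t) \<partial>lborel)"
    by (rule nn_integral_real_affine) (use w in auto)
  also have "\<dots> = ennreal (Im w) * (\<integral>\<^sup>+ t. \<integral>\<^sup>+ x. g (of_real x + of_real t * w) \<partial>lborel \<partial>lborel)"
    using w by (simp add: inner)
  finally show ?thesis .
qed

text \<open>\<open>Im z / Im w\<close> and \<open>Re z - Im z / Im w * Re w\<close> are the coordinates \<open>t\<close> and \<open>x\<close>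
  of \<open>z = x + t w\<close>; the parallelogram spanned by \<open>1\<close> and \<open>w\<close> is the unit square in them.\<close>
definition parallelogram :: "complex \<Rightarrow> complex set" where
  "parallelogram w = {z. 0 \<le> Im z / Im w \<and> Im z / Im w \<le> 1
     \<and> 0 \<le> Re z - Im z / Im w * Re w \<and> Re z - Im z / Im w * Re w \<le> 1}"

lemma parallelogram_borel [measurable]: "parallelogram w \<in> sets borel"
  unfolding parallelogram_def by measurable

lemma oblique_mem_parallelogram_iff:
  assumes "Im w > 0"
  shows "of_real x + of_real t * w \<in> parallelogram w \<longleftrightarrow> x \<in> {0..1} \<and> t \<in> {0..1}"
  using assms by (auto simp: parallelogram_def)

lemma convex_parallelogram: "convex (parallelogram w)"
proof -
  define c where "c z = (Re z - Im z / Im w * Re w, Im z / Im w)" for z :: complex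
  have "linear c"
    by (rule linearI) (auto simp: c_def algebra_simps add_divide_distrib)
  then have "convex (c -` ({0..1} \<times> {0..1}))"
    by (intro convex_linear_vimage convex_Times) auto
  also have "c -` ({0..1} \<times> {0..1}) = parallelogram w"
    by (auto simp: c_def parallelogram_def)
  finally show ?thesis .
qed

lemma convex_hull_subset_parallelogram:
  assumes w: "Im w > 0"
  shows "convex hull {0, 1, 1 + w, w} \<subseteq> parallelogram w"
proof (rule hull_minimal)
  have "0 = of_real 0 + of_real 0 * w" "1 = of_real 1 + of_real 0 * w"
       "1 + w = of_real 1 + of_real 1 * w" "w = of_real 0 + of_real 1 * w" by simp_all
  then show "{0, 1, 1 + w, w} \<subseteq> parallelogram w"
    using oblique_mem_parallelogram_iff[OF w] by (metis atLeastAtMost_iff empty_subsetI insert_subset order_refl zero_le_one)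
qed (rule convex_parallelogram)

lemma emeasure_parallelogram:
  assumes w: "Im w > 0"
  shows "emeasure lborel (parallelogram w) = ennreal (Im w)"
proof -
  have slice: "(\<integral>\<^sup>+ x. indicator (parallelogram w) (of_real x + of_real t * w) \<partial>lborel)
      = indicator {0..1} t" for t
  proof -
    have "(\<lambda>x. indicator (parallelogram w) (of_real x + of_real t * w) :: ennreal)
        = (\<lambda>x. indicator {0..1} t * indicator {0..1} x)"
      by (auto simp: oblique_mem_parallelogram_iff[OF w] fun_eq_iff split: split_indicator)
    then show ?thesis by (simp add: nn_integral_cmult)
  qed
  have "emeasure lborel (parallelogram w) = (\<integral>\<^sup>+ z. indicator (parallelogram w) z \<partial>lborel)"
    by simp
  also have "\<dots> = ennreal (Im w) * (\<integral>\<^sup>+ t. indicator {0..1::real} t \<partial>lborel)"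
    by (subst nn_integral_lborel_oblique[OF _ w]) (simp_all add: slice)
  also have "\<dots> = ennreal (Im w)"
    by (subst nn_integral_indicator) simp_all
  finally show ?thesis .
qed

section \<open>Modules\<close>

lemma ennreal_two_mult_le_sq_add_sq:
  fixes y :: ennreal and a :: real
  assumes "a \<ge> 0"
  shows "ennreal (2 * a) * y \<le> y\<^sup>2 + ennreal (a\<^sup>2)"
proof (cases y)
  case (real r)
  have "2 * a * r \<le> r\<^sup>2 + a\<^sup>2" using sum_squares_bound[of a r] by (simp add: power2_eq_square algebra_simps)
  then show ?thesis using real assms
    by (simp add: ennreal_mult[symmetric] ennreal_plus[symmetric] ennreal_power del: ennreal_plus)
next
  case top
  then show ?thesis using assms by (cases "a = 0") (auto simp: ennreal_mult_top)
qed

text \<open>Cauchy--Schwarz on the unit interval, via the pointwise bound \<open>2 a f \<le> f\<^sup>2 + a\<^sup>2\<close>.\<close>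
lemma nn_integral_unit_interval_square_ge:
  fixes f :: "real \<Rightarrow> ennreal"
  assumes [measurable]: "f \<in> borel_measurable borel" and a: "a \<ge> 0"
    and I: "ennreal a \<le> (\<integral>\<^sup>+ t. f t * indicator {0..1} t \<partial>lborel)"
  shows "ennreal (a\<^sup>2) \<le> (\<integral>\<^sup>+ t. (f t)\<^sup>2 * indicator {0..1} t \<partial>lborel)"
proof -
  define X where "X = (\<integral>\<^sup>+ t. (f t)\<^sup>2 * indicator {0..1} t \<partial>lborel)"
  have "ennreal (a\<^sup>2) + ennreal (a\<^sup>2) = ennreal (2 * a) * ennreal a"
    using a by (simp add: ennreal_plus[symmetric] ennreal_mult[symmetric] power2_eq_square del: ennreal_plus)
  also have "\<dots> \<le> ennreal (2 * a) * (\<integral>\<^sup>+ t. f t * indicator {0..1} t \<partial>lborel)"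
    using I by (rule mult_left_mono) simp
  also have "\<dots> = (\<integral>\<^sup>+ t. ennreal (2 * a) * (f t * indicator {0..1} t) \<partial>lborel)"
    by (simp add: nn_integral_cmult)
  also have "\<dots> \<le> (\<integral>\<^sup>+ t. (f t)\<^sup>2 * indicator {0..1} t + ennreal (a\<^sup>2) * indicator {0..1} t \<partial>lborel)"
    using a by (intro nn_integral_mono) (auto simp: ennreal_two_mult_le_sq_add_sq split: split_indicator)
  also have "\<dots> = ennreal (a\<^sup>2) + X"
    unfolding X_def by (subst nn_integral_add) (auto simp: nn_integral_cmult_indicator add.commute)
  finally show ?thesis
    unfolding X_def[symmetric] by (simp add: ennreal_add_left_cancel_le)
qed

lemma nn_integral_iterated_square_ge:
  fixes F :: "real \<Rightarrow> real \<Rightarrow> ennreal"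
  assumes [measurable]: "\<And>s. F s \<in> borel_measurable borel" and "c \<ge> 0" "a \<le> b"
    and I: "\<And>s. s \<in> {a..b} \<Longrightarrow> ennreal c \<le> (\<integral>\<^sup>+ t. F s t * indicator {0..1} t \<partial>lborel)"
  shows "ennreal ((b - a) * c\<^sup>2) \<le> (\<integral>\<^sup>+ s. \<integral>\<^sup>+ t. (F s t)\<^sup>2 \<partial>lborel \<partial>lborel)"
proof -
  have "ennreal (c\<^sup>2) * indicator {a..b} s \<le> (\<integral>\<^sup>+ t. (F s t)\<^sup>2 \<partial>lborel)" for s
  proof (cases "s \<in> {a..b}")
    case True
    have "ennreal (c\<^sup>2) \<le> (\<integral>\<^sup>+ t. (F s t)\<^sup>2 * indicator {0..1} t \<partial>lborel)"
      using nn_integral_unit_interval_square_ge[OF _ \<open>c \<ge> 0\<close> I[OF True]] by simp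
    also have "\<dots> \<le> (\<integral>\<^sup>+ t. (F s t)\<^sup>2 \<partial>lborel)"
      by (intro nn_integral_mono) (auto split: split_indicator)
    finally show ?thesis using True by simp
  qed simp
  then have "(\<integral>\<^sup>+ s. ennreal (c\<^sup>2) * indicator {a..b} s \<partial>lborel) \<le> (\<integral>\<^sup>+ s. \<integral>\<^sup>+ t. (F s t)\<^sup>2 \<partial>lborel \<partial>lborel)"
    by (intro nn_integral_mono)
  moreover have "(\<integral>\<^sup>+ s. ennreal (c\<^sup>2) * indicator {a..b} s \<partial>lborel) = ennreal ((b - a) * c\<^sup>2)"
    using assms by (simp add: nn_integral_cmult_indicator ennreal_mult[symmetric])
  ultimately show ?thesis by simp
qed

lemma module2_le_admissible: "admissible \<Gamma> \<rho> \<Longrightarrow> module2 \<Gamma> \<le> (\<integral>\<^sup>+ z. (\<rho> z)\<^sup>2 \<partial>lborel)"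
  unfolding module2_def by (rule INF_lower) simp

lemma module2_geI: "(\<And>\<rho>. admissible \<Gamma> \<rho> \<Longrightarrow> c \<le> (\<integral>\<^sup>+ z. (\<rho> z)\<^sup>2 \<partial>lborel)) \<Longrightarrow> c \<le> module2 \<Gamma>"
  unfolding module2_def by (rule INF_greatest) simp

lemma module2_mono: "\<Gamma> \<subseteq> \<Gamma>' \<Longrightarrow> module2 \<Gamma> \<le> module2 \<Gamma>'"
  unfolding module2_def admissible_def by (rule INF_superset_mono) auto

lemma ennreal_inverse_le_of_one_le_mult:
  assumes "c > 0" "1 \<le> ennreal c * x"
  shows "ennreal (1 / c) \<le> x"
proof -
  have "ennreal (1 / c) \<le> ennreal (1 / c) * (ennreal c * x)"
    using mult_left_mono[OF assms(2), of "ennreal (1 / c)"] by simp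
  also have "\<dots> = x"
    using assms(1) by (simp add: mult.assoc[symmetric] ennreal_mult[symmetric])
  finally show ?thesis .
qed

lemma module2_translated_segments_le:
  assumes w: "Im w > 0"
  shows "module2 {linepath (of_real x) (of_real x + w) | x. 0 \<le> x \<and> x \<le> 1} \<le> ennreal (Im w / (cmod w)\<^sup>2)"
    (is "module2 ?\<Gamma> \<le> _")
proof -
  have "w \<noteq> 0" using w by auto
  define \<rho> where "\<rho> z = ennreal (1 / cmod w) * indicator (parallelogram w) z" for z
  have [measurable]: "\<rho> \<in> borel_measurable borel" unfolding \<rho>_def by measurable
  have "admissible ?\<Gamma> \<rho>"
    unfolding admissible_def
  proof (intro conjI ballI)
    fix \<gamma> assume "\<gamma> \<in> ?\<Gamma>"
    then obtain x where x: "0 \<le> x" "x \<le> 1" and \<gamma>: "\<gamma> = linepath (of_real x) (of_real x + w)"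
      by auto
    have "(\<integral>\<^sup>+ t. \<rho> (of_real x + of_real t * w) * indicator {0..1} t \<partial>lborel)
        = (\<integral>\<^sup>+ t. ennreal (1 / cmod w) * indicator {0..1::real} t \<partial>lborel)"
      by (intro nn_integral_cong) (auto simp: \<rho>_def oblique_mem_parallelogram_iff[OF w] x split: split_indicator)
    then show "1 \<le> arclength_integral \<rho> \<gamma>"
      using \<open>w \<noteq> 0\<close>
      by (simp add: \<gamma> arclength_integral_linepath_add nn_integral_cmult_indicator ennreal_mult[symmetric])
  qed simp
  then have "module2 ?\<Gamma> \<le> (\<integral>\<^sup>+ z. (\<rho> z)\<^sup>2 \<partial>lborel)"
    by (rule module2_le_admissible)
  also have "\<dots> = (\<integral>\<^sup>+ z. ennreal (1 / (cmod w)\<^sup>2) * indicator (parallelogram w) z \<partial>lborel)"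
    by (intro nn_integral_cong)
       (auto simp: \<rho>_def power_mult_distrib ennreal_power power_divide split: split_indicator)
  also have "\<dots> = ennreal (Im w / (cmod w)\<^sup>2)"
    using w by (simp add: nn_integral_cmult_indicator emeasure_parallelogram ennreal_mult[symmetric])
  finally show ?thesis .
qed

lemma module2_translated_segments_ge:
  assumes w: "Im w > 0"
  shows "ennreal (Im w / (cmod w)\<^sup>2) \<le> module2 {linepath (of_real x) (of_real x + w) | x. 0 \<le> x \<and> x \<le> 1}"
proof (rule module2_geI)
  fix \<rho> assume "admissible {linepath (of_real x) (of_real x + w) | x. 0 \<le> x \<and> x \<le> 1} \<rho>"
  then have [measurable]: "\<rho> \<in> borel_measurable borel"
    and adm: "\<And>x. x \<in> {0..1} \<Longrightarrow> 1 \<le> arclength_integral \<rho> (linepath (of_real x) (of_real x + w))"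
    by (auto simp: admissible_def)
  have "ennreal ((1 - 0) * (1 / cmod w)\<^sup>2)
      \<le> (\<integral>\<^sup>+ x. \<integral>\<^sup>+ t. (\<rho> (of_real x + of_real t * w))\<^sup>2 \<partial>lborel \<partial>lborel)"
    using adm w
    by (intro nn_integral_iterated_square_ge ennreal_inverse_le_of_one_le_mult)
       (auto simp: arclength_integral_linepath_add)
  also have "\<dots> = (\<integral>\<^sup>+ t. \<integral>\<^sup>+ x. (\<rho> (of_real x + of_real t * w))\<^sup>2 \<partial>lborel \<partial>lborel)"
    by (rule lborel_pair.Fubini'[symmetric]) measurable
  finally have "ennreal (Im w) * ennreal ((1 / cmod w)\<^sup>2)
      \<le> ennreal (Im w) * (\<integral>\<^sup>+ t. \<integral>\<^sup>+ x. (\<rho> (of_real x + of_real t * w))\<^sup>2 \<partial>lborel \<partial>lborel)"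
    by (intro mult_left_mono) auto
  also have "\<dots> = (\<integral>\<^sup>+ z. (\<rho> z)\<^sup>2 \<partial>lborel)"
    using w by (simp add: nn_integral_lborel_oblique)
  finally show "ennreal (Im w / (cmod w)\<^sup>2) \<le> (\<integral>\<^sup>+ z. (\<rho> z)\<^sup>2 \<partial>lborel)"
    using w by (simp add: ennreal_mult[symmetric] power_divide)
qed

lemma module2_translated_segments:
  "Im w > 0 \<Longrightarrow>
    module2 {linepath (of_real x) (of_real x + w) | x. 0 \<le> x \<and> x \<le> 1} = ennreal (Im w / (cmod w)\<^sup>2)"
  using module2_translated_segments_le module2_translated_segments_ge by (rule antisym)

lemma arclength_integral_horizontal_segment:
  assumes "\<rho> \<in> borel_measurable borel"
  shows "arclength_integral \<rho> (linepath p (1 + p)) = (\<integral>\<^sup>+ t. \<rho> (of_real t + p) * indicator {0..1} t \<partial>lborel)"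
  using arclength_integral_linepath_add[OF assms, of p 1] by (simp add: add.commute)

lemma module2_horizontal_segments_le:
  assumes v: "Im v > 0" and h: "h > 0"
  shows "module2 {linepath (of_real s * v) (1 + of_real s * v) | s. 0 \<le> s \<and> s \<le> h} \<le> ennreal (h * Im v)"
    (is "module2 ?\<Sigma> \<le> _")
proof -
  define w where "w = of_real h * v"
  have w: "Im w > 0" "Im w = h * Im v" using v h by (simp_all add: w_def)
  have "admissible ?\<Sigma> (indicator (parallelogram w))"
    unfolding admissible_def
  proof (intro conjI ballI)
    fix \<gamma> assume "\<gamma> \<in> ?\<Sigma>"
    then obtain s where s: "0 \<le> s" "s \<le> h" and \<gamma>: "\<gamma> = linepath (of_real s * v) (1 + of_real s * v)"
      by auto
    have "of_real (s / h) * w = of_real s * v"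
      using h by (simp add: w_def)
    moreover have "of_real t + of_real (s / h) * w \<in> parallelogram w" if "t \<in> {0..1}" for t
      using s h that by (subst oblique_mem_parallelogram_iff[OF w(1)]) auto
    ultimately have "(\<integral>\<^sup>+ t. indicator (parallelogram w) (of_real t + of_real s * v) * indicator {0..1} t \<partial>lborel)
        = (\<integral>\<^sup>+ t. indicator {0..1::real} t \<partial>lborel)"
      by (intro nn_integral_cong) (simp split: split_indicator)
    then show "1 \<le> arclength_integral (indicator (parallelogram w)) \<gamma>"
      by (simp add: \<gamma> arclength_integral_horizontal_segment nn_integral_indicator[of _ lborel, unfolded])
  qed simp
  then have "module2 ?\<Sigma> \<le> (\<integral>\<^sup>+ z. (indicator (parallelogram w) z)\<^sup>2 \<partial>lborel)"
    by (rule module2_le_admissible)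
  also have "\<dots> = (\<integral>\<^sup>+ z. indicator (parallelogram w) z \<partial>lborel)"
    by (intro nn_integral_cong) (simp split: split_indicator)
  also have "\<dots> = ennreal (h * Im v)"
    using w by (simp add: emeasure_parallelogram)
  finally show ?thesis .
qed

lemma module2_horizontal_segments_ge:
  assumes v: "Im v > 0" and h: "h > 0"
  shows "ennreal (h * Im v) \<le> module2 {linepath (of_real s * v) (1 + of_real s * v) | s. 0 \<le> s \<and> s \<le> h}"
proof (rule module2_geI)
  fix \<rho> assume "admissible {linepath (of_real s * v) (1 + of_real s * v) | s. 0 \<le> s \<and> s \<le> h} \<rho>"
  then have [measurable]: "\<rho> \<in> borel_measurable borel"
    and adm: "\<And>s. s \<in> {0..h} \<Longrightarrow> 1 \<le> arclength_integral \<rho> (linepath (of_real s * v) (1 + of_real s * v))"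
    by (auto simp: admissible_def)
  have "ennreal ((h - 0) * 1\<^sup>2) \<le> (\<integral>\<^sup>+ s. \<integral>\<^sup>+ t. (\<rho> (of_real t + of_real s * v))\<^sup>2 \<partial>lborel \<partial>lborel)"
    using adm h by (intro nn_integral_iterated_square_ge) (auto simp: arclength_integral_horizontal_segment)
  then have "ennreal (Im v) * ennreal h
      \<le> ennreal (Im v) * (\<integral>\<^sup>+ s. \<integral>\<^sup>+ t. (\<rho> (of_real t + of_real s * v))\<^sup>2 \<partial>lborel \<partial>lborel)"
    by (intro mult_left_mono) auto
  also have "\<dots> = (\<integral>\<^sup>+ z. (\<rho> z)\<^sup>2 \<partial>lborel)"
    using v by (simp add: nn_integral_lborel_oblique)
  finally show "ennreal (h * Im v) \<le> (\<integral>\<^sup>+ z. (\<rho> z)\<^sup>2 \<partial>lborel)"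
    using h v by (simp add: ennreal_mult[symmetric] mult.commute)
qed

lemma module2_horizontal_segments:
  "Im v > 0 \<Longrightarrow> h > 0 \<Longrightarrow>
    module2 {linepath (of_real s * v) (1 + of_real s * v) | s. 0 \<le> s \<and> s \<le> h} = ennreal (h * Im v)"
  using module2_horizontal_segments_le module2_horizontal_segments_ge by (rule antisym)

definition joining_curves :: "complex \<Rightarrow> (real \<Rightarrow> complex) set" where
  "joining_curves w = {\<gamma>. rectifiable_curve \<gamma> \<and> path_image \<gamma> \<subseteq> convex hull {0, 1, 1 + w, w}
     \<and> pathstart \<gamma> \<in> closed_segment 0 w \<and> pathfinish \<gamma> \<in> closed_segment 1 (1 + w)}"

text \<open>\<open>\<bar>Im w\<bar> / cmod w\<close> is the distance between the parallel lines \<open>\<real> w\<close> and \<open>1 + \<real> w\<close>.\<close>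
lemma abs_Im_le_norm_mult_norm_add:
  "\<bar>Im w\<bar> \<le> cmod w * cmod (1 + of_real r * w)"
proof -
  have "Im (cnj w * (1 + of_real r * w)) = - Im w"
    by (simp add: algebra_simps)
  then have "\<bar>Im w\<bar> \<le> cmod (cnj w * (1 + of_real r * w))"
    by (metis abs_Im_le_cmod abs_minus_cancel)
  then show ?thesis by (simp add: norm_mult)
qed

lemma module2_joining_curves_le:
  assumes w: "Im w > 0"
  shows "module2 (joining_curves w) \<le> ennreal ((cmod w)\<^sup>2 / Im w)"
proof -
  define \<rho> where "\<rho> z = ennreal (cmod w / Im w) * indicator (parallelogram w) z" for z
  have [measurable]: "\<rho> \<in> borel_measurable borel" unfolding \<rho>_def by measurable
  have "admissible (joining_curves w) \<rho>"
    unfolding admissible_def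
  proof (intro conjI ballI)
    fix \<gamma> assume "\<gamma> \<in> joining_curves w"
    then have rc: "rectifiable_curve \<gamma>" and img: "path_image \<gamma> \<subseteq> convex hull {0, 1, 1 + w, w}"
      and start: "\<gamma> 0 \<in> closed_segment 0 w" and finish: "\<gamma> 1 \<in> closed_segment 1 (1 + w)"
      by (auto simp: joining_curves_def pathstart_def pathfinish_def)
    have "\<gamma> t \<in> parallelogram w" if "t \<in> {0..1}" for t
      using that img convex_hull_subset_parallelogram[OF w] unfolding path_image_def by blast
    then have "ennreal (cmod w / Im w) * ennreal (cmod (\<gamma> 1 - \<gamma> 0)) \<le> arclength_integral \<rho> \<gamma>"
      by (intro arclength_integral_ge_norm[OF rc]) (simp add: \<rho>_def)
    moreover have "Im w \<le> cmod w * cmod (\<gamma> 1 - \<gamma> 0)"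
    proof -
      obtain u where u: "\<gamma> 0 = u *\<^sub>R w" using start by (auto simp: in_segment)
      obtain v where v: "\<gamma> 1 = 1 + v *\<^sub>R w" using finish by (auto simp: in_segment algebra_simps)
      have "\<gamma> 1 - \<gamma> 0 = 1 + of_real (v - u) * w"
        by (simp add: u v scaleR_conv_of_real algebra_simps)
      then show ?thesis using abs_Im_le_norm_mult_norm_add[of w "v - u"] by simp
    qed
    then have "1 \<le> ennreal (cmod w / Im w) * ennreal (cmod (\<gamma> 1 - \<gamma> 0))"
      using w by (simp add: ennreal_mult[symmetric] field_simps)
    ultimately show "1 \<le> arclength_integral \<rho> \<gamma>" by simp
  qed simp
  then have "module2 (joining_curves w) \<le> (\<integral>\<^sup>+ z. (\<rho> z)\<^sup>2 \<partial>lborel)"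
    by (rule module2_le_admissible)
  also have "\<dots> = (\<integral>\<^sup>+ z. ennreal ((cmod w / Im w)\<^sup>2) * indicator (parallelogram w) z \<partial>lborel)"
    using w by (intro nn_integral_cong) (auto simp: \<rho>_def power_mult_distrib ennreal_power split: split_indicator)
  also have "\<dots> = ennreal ((cmod w)\<^sup>2 / Im w)"
    using w by (simp add: nn_integral_cmult_indicator emeasure_parallelogram ennreal_mult[symmetric]
        power2_eq_square)
  finally show ?thesis .
qed

lemma horizontal_segments_subset_joining_curves:
  assumes h: "h > 0"
  shows "{linepath (of_real s * v) (1 + of_real s * v) | s. 0 \<le> s \<and> s \<le> h} \<subseteq> joining_curves (of_real h * v)"
proof clarify
  fix s :: real assume s: "0 \<le> s" "s \<le> h"
  define w where "w = of_real h * v"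
  define p where "p = of_real s * v"
  have p: "p = (s / h) *\<^sub>R w" "1 + p = (1 - s / h) *\<^sub>R 1 + (s / h) *\<^sub>R (1 + w)"
    using h by (auto simp: p_def w_def scaleR_conv_of_real algebra_simps)
  have start: "p \<in> closed_segment 0 w" and finish: "1 + p \<in> closed_segment 1 (1 + w)"
    unfolding in_segment using s h p by (auto intro!: exI[of _ "s / h"])
  have "closed_segment 0 w \<subseteq> convex hull {0, 1, 1 + w, w}" "closed_segment 1 (1 + w) \<subseteq> convex hull {0, 1, 1 + w, w}"
    by (rule closed_segment_subset; auto intro: hull_inc)+
  then have "p \<in> convex hull {0, 1, 1 + w, w}" "1 + p \<in> convex hull {0, 1, 1 + w, w}"
    using start finish by auto
  then have "path_image (linepath p (1 + p)) \<subseteq> convex hull {0, 1, 1 + w, w}"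
    by (simp add: closed_segment_subset)
  moreover have "rectifiable_curve (linepath p (1 + p))"
    by (simp add: rectifiable_curve_def curve_length_on_linepath)
  ultimately show "linepath p (1 + p) \<in> joining_curves w"
    using start finish by (simp add: joining_curves_def)
qed

theorem proposition2p5:
  fixes h \<theta> :: real
  assumes "h > 0" and "0 < \<theta>" and "\<theta> < pi / 2"
  defines "\<Gamma>\<theta> \<equiv> {linepath (of_real x) (of_real x + of_real h * cis \<theta>) | x. 0 \<le> x \<and> x \<le> 1}"
      and "\<Sigma>0 \<equiv> {linepath (of_real s * cis \<theta>) (1 + of_real s * cis \<theta>) | s. 0 \<le> s \<and> s \<le> h}"
      and "\<Sigma> \<equiv> {\<gamma>. rectifiable_curve \<gamma> \<and> path_image \<gamma> \<subseteq> convex hull {0, 1, 1 + of_real h * cis \<theta>, of_real h * cis \<theta>}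
                   \<and> pathstart \<gamma> \<in> closed_segment 0 (of_real h * cis \<theta>)
                   \<and> pathfinish \<gamma> \<in> closed_segment 1 (1 + of_real h * cis \<theta>)}"
  shows "module2 \<Gamma>\<theta> = ennreal (sin \<theta> / h)
     \<and> module2 \<Gamma>\<theta> * module2 \<Sigma>0 = ennreal ((sin \<theta>)\<^sup>2)
     \<and> module2 \<Sigma> \<le> module2 \<Sigma>0 + ennreal (h * (cos \<theta>)\<^sup>2 / sin \<theta>)
     \<and> module2 \<Sigma>0 \<le> module2 \<Sigma> + ennreal (h * (cos \<theta>)\<^sup>2 / sin \<theta>)"
proof -
  define w where "w = of_real h * cis \<theta>"
  have sin: "sin \<theta> > 0" using assms(2,3) by (intro sin_gt_zero) auto
  have w: "Im w > 0" "Im w = h * sin \<theta>" "cmod w = h"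
    using \<open>h > 0\<close> sin by (simp_all add: w_def norm_mult)
  have \<Gamma>\<theta>: "module2 \<Gamma>\<theta> = ennreal (sin \<theta> / h)"
    using module2_translated_segments[OF w(1)] w \<open>h > 0\<close>
    unfolding \<Gamma>\<theta>_def w_def by (simp add: power2_eq_square)
  have \<Sigma>0: "module2 \<Sigma>0 = ennreal (h * sin \<theta>)"
    using module2_horizontal_segments[of "cis \<theta>" h] sin \<open>h > 0\<close> unfolding \<Sigma>0_def by simp
  have "\<Sigma> = joining_curves w"
    unfolding \<Sigma>_def joining_curves_def w_def ..
  then have \<Sigma>_le: "module2 \<Sigma> \<le> ennreal (h / sin \<theta>)"
    using module2_joining_curves_le[OF w(1)] w \<open>h > 0\<close> by (simp add: power2_eq_square)
  have \<Sigma>0_le: "module2 \<Sigma>0 \<le> module2 \<Sigma>"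
    using module2_mono[OF horizontal_segments_subset_joining_curves[OF \<open>h > 0\<close>]] \<open>\<Sigma> = joining_curves w\<close>
    unfolding \<Sigma>0_def w_def by simp
  have "h * sin \<theta> + h * (cos \<theta>)\<^sup>2 / sin \<theta> = h / sin \<theta>"
    using sin sin_cos_squared_add[of \<theta>] by (simp add: field_simps power2_eq_square distrib_left[symmetric])
  then have "ennreal (h * sin \<theta>) + ennreal (h * (cos \<theta>)\<^sup>2 / sin \<theta>) = ennreal (h / sin \<theta>)"
    using \<open>h > 0\<close> sin by (simp add: ennreal_plus[symmetric] del: ennreal_plus)
  moreover have "ennreal (sin \<theta> / h) * ennreal (h * sin \<theta>) = ennreal ((sin \<theta>)\<^sup>2)"
    using \<open>h > 0\<close> sin by (simp add: ennreal_mult[symmetric] power2_eq_square)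
  ultimately show ?thesis
    using \<Gamma>\<theta> \<Sigma>0 \<Sigma>_le \<Sigma>0_le by (auto intro: order_trans add_increasing2)
qed

end
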